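(* Let $G$ be a group satisfying the property $\mathsf{FM}$ and $\nu$ a conjugation-invariant pseudo-norm on $G$. Then for any elements $g_1,\dots,g_k\in G$ and real numbers $s_1,\dots,s_k$, the limit \[ \lim_{n\to\infty}\frac1n\,\nu\big(g_1^{[s_1n]}\cdots g_k^{[s_kn]}\big) \] exists, where $[\cdot]$ denotes the integer part.
   Context: A conjugation-invariant pseudo-norm on a group $G$ is a function $\nu\colon G\to\mathbb{R}_{\ge0}$ with $\nu(1)=0$, $\nu(f)=\nu(f^{-1})$, $\nu(fg)\le\nu(f)+\nu(g)$ and $\nu(gfg^{-1})=\nu(f)$ for all $f,g\in G$. For a subgroup $H\le G$, the fragmentation norm $\nu_H(f)$ is the minimal $k$ such that $f=g_1h_1g_1^{-1}\cdots g_kh_kg_k^{-1}$ with $g_i\in G$, $h_i\in H$ ($\infty$ if none exists); $G$ is c-generated by $H$ if $\nu_H$ is finite everywhere. For $K\subset G$, $\mathrm{D}^f_H(K)$ is the set of $h_0\in G$ such that for all $g_1,\dots,g_k\in G$ there is $h\in G$ such that every element of $hh_0h^{-1}K(hh_0h^{-1})^{-1}$ commutes with every element of $g_1Hg_1^{-1}\cup\dots\cup g_kHg_k^{-1}$. $(G,H)$ satisfies property $\mathsf{FM}$ if $G$ is c-generated by $H$ and $\mathrm{D}^f_H(h_1Hh_1^{-1}\cup\dots\cup h_kHh_k^{-1})\ne\emptyset$ for all $h_1,\dots,h_k\in G$; $G$ satisfies $\mathsf{FM}$ if $(G,H)$ does for some subgroup $H$. *)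

theory Defs
  imports "HOL-Algebra.Algebra" "HOL-Analysis.Analysis"
begin

definition conj_elt :: "('a, 'b) monoid_scheme \<Rightarrow> 'a \<Rightarrow> 'a \<Rightarrow> 'a" where
  "conj_elt G g x = g \<otimes>\<^bsub>G\<^esub> x \<otimes>\<^bsub>G\<^esub> inv\<^bsub>G\<^esub> g"

definition cinv_pseudo_norm :: "('a, 'b) monoid_scheme \<Rightarrow> ('a \<Rightarrow> real) \<Rightarrow> bool" where
  "cinv_pseudo_norm G \<nu> \<longleftrightarrow>
     (\<forall>f\<in>carrier G. \<nu> f \<ge> 0) \<and> \<nu> \<one>\<^bsub>G\<^esub> = 0 \<and>
     (\<forall>f\<in>carrier G. \<nu> (inv\<^bsub>G\<^esub> f) = \<nu> f) \<and>
     (\<forall>f\<in>carrier G. \<forall>g\<in>carrier G. \<nu> (f \<otimes>\<^bsub>G\<^esub> g) \<le> \<nu> f + \<nu> g) \<and>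
     (\<forall>f\<in>carrier G. \<forall>g\<in>carrier G. \<nu> (conj_elt G g f) = \<nu> f)"

definition gprod :: "('a, 'b) monoid_scheme \<Rightarrow> (nat \<Rightarrow> 'a) \<Rightarrow> nat \<Rightarrow> 'a" where
  "gprod G x k = foldr (\<lambda>i acc. x i \<otimes>\<^bsub>G\<^esub> acc) [0..<k] \<one>\<^bsub>G\<^esub>"

definition c_generated :: "('a, 'b) monoid_scheme \<Rightarrow> 'a set \<Rightarrow> bool" where
  "c_generated G H \<longleftrightarrow>
     (\<forall>f\<in>carrier G. \<exists>k g h. (\<forall>i<k. g i \<in> carrier G \<and> h i \<in> H) \<and>
        f = gprod G (\<lambda>i. conj_elt G (g i) (h i)) k)"

definition Df :: "('a, 'b) monoid_scheme \<Rightarrow> 'a set \<Rightarrow> 'a set \<Rightarrow> 'a set" where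
  "Df G H K = {h0 \<in> carrier G. \<forall>k (g :: nat \<Rightarrow> 'a). (\<forall>i<k. g i \<in> carrier G) \<longrightarrow>
      (\<exists>h\<in>carrier G. \<forall>x\<in>K. \<forall>i<k. \<forall>y\<in>H.
         conj_elt G (conj_elt G h h0) x \<otimes>\<^bsub>G\<^esub> conj_elt G (g i) y =
         conj_elt G (g i) y \<otimes>\<^bsub>G\<^esub> conj_elt G (conj_elt G h h0) x)}"

definition FM_pair :: "('a, 'b) monoid_scheme \<Rightarrow> 'a set \<Rightarrow> bool" where
  "FM_pair G H \<longleftrightarrow> subgroup H G \<and> c_generated G H \<and>
     (\<forall>k (h :: nat \<Rightarrow> 'a). (\<forall>i<k. h i \<in> carrier G) \<longrightarrow>
        Df G H (\<Union>i<k. conj_elt G (h i) ` H) \<noteq> {})"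

definition FM :: "('a, 'b) monoid_scheme \<Rightarrow> bool" where
  "FM G \<longleftrightarrow> (\<exists>H. FM_pair G H)"

end

theory Submission
  imports Defs
begin

text \<open>
  Under FM every \<open>g\<^sub>j\<close> is a product of conjugates of elements of \<open>H\<close>, and a
  conjugate of an element of \<open>D\<^sup>f\<^sub>H\<close> gives one \<open>\<phi>\<close> such that
  \<open>\<phi> g\<^sub>j \<phi>\<^sup>-\<^sup>1\<close> commutes with every \<open>g\<^sub>i\<close>. Writing
  \<open>T\<^sub>n\<close> for the product in question, the factors of \<open>\<phi> T\<^sub>n \<phi>\<^sup>-\<^sup>1\<close>
  can then be shuffled into \<open>T\<^sub>m\<close>, so \<open>T\<^sub>m\<^sub>+\<^sub>n\<close> equals
  \<open>T\<^sub>m \<phi> T\<^sub>n \<phi>\<^sup>-\<^sup>1\<close> up to \<open>k\<close> errors, the \<open>i\<close>-th of norm at most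
  \<open>2 \<nu>(\<phi>) + \<nu>(g\<^sub>i)\<close>. Hence \<open>\<nu>(T\<^sub>n)\<close> is subadditive up to a constant,
  and Fekete's lemma gives the limit.
\<close>

section \<open>Ordered products in a group\<close>

context group
begin

lemma inv_mult_cancel_left [simp]: "p \<in> carrier G \<Longrightarrow> z \<in> carrier G \<Longrightarrow> inv p \<otimes> (p \<otimes> z) = z"
  by (simp flip: m_assoc)

lemma mult_inv_cancel_left [simp]: "p \<in> carrier G \<Longrightarrow> z \<in> carrier G \<Longrightarrow> p \<otimes> (inv p \<otimes> z) = z"
  by (simp flip: m_assoc)

lemma conj_elt_closed [intro, simp]:
  "p \<in> carrier G \<Longrightarrow> x \<in> carrier G \<Longrightarrow> conj_elt G p x \<in> carrier G"
  unfolding conj_elt_def by simp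

lemma conj_elt_hom: "p \<in> carrier G \<Longrightarrow> conj_elt G p \<in> hom G G"
  unfolding conj_elt_def by (rule homI) (auto simp: m_assoc)

lemma commute_iff_conj_elt_fixed:
  assumes "x \<in> carrier G" "y \<in> carrier G"
  shows "x \<otimes> y = y \<otimes> x \<longleftrightarrow> conj_elt G y x = x"
  unfolding conj_elt_def using assms
  by (metis m_closed inv_solve_right)

lemma commute_int_pow:
  assumes "x \<in> carrier G" "y \<in> carrier G" "x \<otimes> y = y \<otimes> x"
  shows "x [^] (a::int) \<otimes> y = y \<otimes> x [^] a"
proof -
  have "conj_elt G y (x [^] a) = conj_elt G y x [^] a"
    using hom_int_pow[OF conj_elt_hom] assms is_group by blast
  then show ?thesis using assms by (simp add: commute_iff_conj_elt_fixed)
qed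

lemma foldr_mult_closed:
  "\<forall>i\<in>set xs. x i \<in> carrier G \<Longrightarrow> c \<in> carrier G \<Longrightarrow>
   foldr (\<lambda>i acc. x i \<otimes> acc) xs c \<in> carrier G"
  by (induction xs) auto

lemma foldr_mult_right:
  "\<forall>i\<in>set xs. x i \<in> carrier G \<Longrightarrow> c \<in> carrier G \<Longrightarrow>
   foldr (\<lambda>i acc. x i \<otimes> acc) xs c = foldr (\<lambda>i acc. x i \<otimes> acc) xs \<one> \<otimes> c"
  by (induction xs) (auto simp: m_assoc foldr_mult_closed)

lemma gprod_0 [simp]: "gprod G x 0 = \<one>"
  by (simp add: gprod_def)

lemma gprod_closed [intro, simp]: "\<forall>i<k. x i \<in> carrier G \<Longrightarrow> gprod G x k \<in> carrier G"
  unfolding gprod_def by (rule foldr_mult_closed) auto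

lemma gprod_Suc: "\<forall>i<Suc k. x i \<in> carrier G \<Longrightarrow> gprod G x (Suc k) = gprod G x k \<otimes> x k"
  unfolding gprod_def by (subst foldr_mult_right[symmetric]) auto

lemma gprod_cong: "\<forall>i<k. x i = y i \<Longrightarrow> gprod G x k = gprod G y k"
  unfolding gprod_def by (intro foldr_cong) auto

lemma hom_gprod:
  assumes "h \<in> hom G G" "\<forall>i<k. x i \<in> carrier G"
  shows "h (gprod G x k) = gprod G (\<lambda>i. h (x i)) k"
  using assms(2)
proof (induction k)
  case 0
  then show ?case
    using assms(1) group_hom.hom_one[of G G h] by (simp add: group_hom_def group_hom_axioms_def)
next
  case (Suc k)
  then have "\<forall>i<Suc k. h (x i) \<in> carrier G" using assms(1) by (auto simp: hom_def)
  with Suc assms(1) show ?case by (simp add: gprod_Suc hom_mult)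
qed

lemma commute_gprod:
  assumes "w \<in> carrier G" "\<forall>l<n. f l \<in> carrier G \<and> w \<otimes> f l = f l \<otimes> w"
  shows "w \<otimes> gprod G f n = gprod G f n \<otimes> w"
proof -
  have "conj_elt G w (gprod G f n) = gprod G (\<lambda>l. conj_elt G w (f l)) n"
    using assms by (intro hom_gprod conj_elt_hom) auto
  also have "\<dots> = gprod G f n"
    using assms by (intro gprod_cong) (auto simp flip: commute_iff_conj_elt_fixed)
  finally show ?thesis
    using assms by (subst eq_commute) (simp add: commute_iff_conj_elt_fixed)
qed

lemma gprod_commute_gprod:
  assumes "\<forall>l<m. a l \<in> carrier G" "\<forall>l<n. b l \<in> carrier G"
    and "\<forall>l<m. \<forall>l'<n. a l \<otimes> b l' = b l' \<otimes> a l"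
  shows "gprod G a m \<otimes> gprod G b n = gprod G b n \<otimes> gprod G a m"
proof (rule commute_gprod)
  show "\<forall>l<n. b l \<in> carrier G \<and> gprod G a m \<otimes> b l = b l \<otimes> gprod G a m"
    using assms by (metis commute_gprod)
qed (use assms in auto)

lemma gprod_mult_distrib:
  assumes "\<forall>i<k. a i \<in> carrier G \<and> b i \<in> carrier G"
    and "\<forall>i<k. \<forall>j<k. b j \<otimes> a i = a i \<otimes> b j"
  shows "gprod G (\<lambda>i. a i \<otimes> b i) k = gprod G a k \<otimes> gprod G b k"
  using assms
proof (induction k)
  case (Suc k)
  then have ab: "gprod G a k \<in> carrier G" "gprod G b k \<in> carrier G" "a k \<in> carrier G" "b k \<in> carrier G"
    by auto
  have "gprod G a k \<otimes> gprod G b k \<otimes> (a k \<otimes> b k) = gprod G a k \<otimes> (gprod G b k \<otimes> a k) \<otimes> b k"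
    using ab by (simp add: m_assoc)
  also have "gprod G b k \<otimes> a k = a k \<otimes> gprod G b k"
    using Suc.prems by (intro commute_gprod[symmetric]) auto
  also have "gprod G a k \<otimes> (a k \<otimes> gprod G b k) \<otimes> b k = gprod G a k \<otimes> a k \<otimes> (gprod G b k \<otimes> b k)"
    using ab by (simp add: m_assoc)
  finally show ?case using Suc by (simp add: gprod_Suc)
qed simp

lemma conj_elt_int_pow_commute:
  assumes "p \<in> carrier G" "x \<in> carrier G" "y \<in> carrier G"
    and "conj_elt G p y \<otimes> x = x \<otimes> conj_elt G p y"
  shows "conj_elt G p (y [^] (b::int)) \<otimes> x [^] (a::int) = x [^] a \<otimes> conj_elt G p (y [^] b)"
proof -
  have "conj_elt G p (y [^] b) = conj_elt G p y [^] b"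
    using hom_int_pow[OF conj_elt_hom] assms is_group by blast
  with assms show ?thesis
    by (metis commute_int_pow conj_elt_closed int_pow_closed)
qed

lemma gprod_mult_conj_elt_gprod:
  assumes "p \<in> carrier G" "\<forall>i<k. x i \<in> carrier G \<and> w i \<in> carrier G"
    and "\<forall>i<k. \<forall>j<k. conj_elt G p (w j) \<otimes> x i = x i \<otimes> conj_elt G p (w j)"
  shows "gprod G (\<lambda>i. x i \<otimes> conj_elt G p (w i)) k = gprod G x k \<otimes> conj_elt G p (gprod G w k)"
proof -
  have "gprod G (\<lambda>i. x i \<otimes> conj_elt G p (w i)) k = gprod G x k \<otimes> gprod G (\<lambda>i. conj_elt G p (w i)) k"
    using assms by (intro gprod_mult_distrib) auto
  also have "gprod G (\<lambda>i. conj_elt G p (w i)) k = conj_elt G p (gprod G w k)"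
    using assms by (intro hom_gprod[symmetric] conj_elt_hom) auto
  finally show ?thesis .
qed

section \<open>Commuting conjugates from property FM\<close>

lemma c_generated_gprod_decomposition:
  fixes g :: "nat \<Rightarrow> 'a"
  assumes "c_generated G H" "\<forall>i<k. g i \<in> carrier G"
  obtains n c m x where "\<forall>p<n::nat. c p \<in> carrier G"
    and "\<forall>i<k. g i = gprod G (x i) (m i) \<and> (\<forall>l<m i. x i l \<in> (\<Union>p<n. conj_elt G (c p) ` H))"
proof -
  have "\<forall>i<k. \<exists>M C h. (\<forall>l<M. C l \<in> carrier G \<and> h l \<in> H) \<and>
      g i = gprod G (\<lambda>l. conj_elt G (C l) (h l)) M"
    using assms unfolding c_generated_def by blast
  then obtain M C h where dec: "\<forall>i<k. (\<forall>l<M i. C i l \<in> carrier G \<and> h i l \<in> H) \<and>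
      g i = gprod G (\<lambda>l. conj_elt G (C i l) (h i l)) (M i)"
    by metis
  have "finite (\<Union>i<k. C i ` {..<M i})"
    by simp
  from finite_imp_nat_seg_image_inj_on[OF this]
  obtain n :: nat and c where enum: "(\<Union>i<k. C i ` {..<M i}) = c ` {p. p < n}"
    by blast
  show thesis
  proof (rule that[of n c "\<lambda>i l. conj_elt G (C i l) (h i l)" M])
    show "\<forall>p<n. c p \<in> carrier G"
    proof (intro allI impI)
      fix p assume "p < n"
      then have "c p \<in> (\<Union>i<k. C i ` {..<M i})"
        unfolding enum by simp
      then obtain i l where "i < k" "l < M i" "c p = C i l"
        by auto
      then show "c p \<in> carrier G"
        using dec by simp
    qed
    show "\<forall>i<k. g i = gprod G (\<lambda>l. conj_elt G (C i l) (h i l)) (M i) \<and>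
        (\<forall>l<M i. conj_elt G (C i l) (h i l) \<in> (\<Union>p<n. conj_elt G (c p) ` H))"
    proof (intro allI impI conjI)
      fix i l assume "i < k" "l < M i"
      then have "C i l \<in> c ` {p. p < n}"
        unfolding enum[symmetric] by auto
      then obtain p where "p < n" "C i l = c p"
        by auto
      with dec \<open>i < k\<close> \<open>l < M i\<close> show "conj_elt G (C i l) (h i l) \<in> (\<Union>p<n. conj_elt G (c p) ` H)"
        by auto
    next
      fix i assume "i < k"
      with dec show "g i = gprod G (\<lambda>l. conj_elt G (C i l) (h i l)) (M i)"
        by simp
    qed
  qed
qed

lemma FM_pair_conj_commuting:
  fixes c :: "nat \<Rightarrow> 'a"
  assumes "FM_pair G H" "\<forall>p<n. c p \<in> carrier G"
  obtains \<phi> where "\<phi> \<in> carrier G"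
    and "\<forall>x\<in>(\<Union>p<n. conj_elt G (c p) ` H). \<forall>z\<in>(\<Union>p<n. conj_elt G (c p) ` H).
           conj_elt G \<phi> x \<otimes> z = z \<otimes> conj_elt G \<phi> x"
proof -
  obtain h0 where "h0 \<in> Df G H (\<Union>p<n. conj_elt G (c p) ` H)"
    using assms unfolding FM_pair_def by blast
  then obtain h where "h \<in> carrier G" "h0 \<in> carrier G"
    and "\<forall>x\<in>(\<Union>p<n. conj_elt G (c p) ` H). \<forall>p<n. \<forall>y\<in>H.
       conj_elt G (conj_elt G h h0) x \<otimes> conj_elt G (c p) y = conj_elt G (c p) y \<otimes> conj_elt G (conj_elt G h h0) x"
    using assms(2) unfolding Df_def by blast
  then show thesis
    by (intro that[of "conj_elt G h h0"]) auto
qed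

lemma FM_conj_commuting:
  fixes g :: "nat \<Rightarrow> 'a"
  assumes "FM G" "\<forall>i<k. g i \<in> carrier G"
  obtains \<phi> where "\<phi> \<in> carrier G" "\<forall>i<k. \<forall>j<k. conj_elt G \<phi> (g j) \<otimes> g i = g i \<otimes> conj_elt G \<phi> (g j)"
proof -
  obtain H where FM_H: "FM_pair G H"
    using assms(1) unfolding FM_def by blast
  then have "subgroup H G" and cgen: "c_generated G H"
    unfolding FM_pair_def by simp_all
  from \<open>subgroup H G\<close> have "H \<subseteq> carrier G"
    by (rule subgroup.subset)
  obtain n c m x where c: "\<forall>p<n::nat. c p \<in> carrier G"
    and dec: "\<forall>i<k. g i = gprod G (x i) (m i) \<and> (\<forall>l<m i. x i l \<in> (\<Union>p<n. conj_elt G (c p) ` H))"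
    by (rule c_generated_gprod_decomposition[OF cgen assms(2)])
  define K where "K = (\<Union>p<n. conj_elt G (c p) ` H)"
  obtain \<phi> where \<phi>: "\<phi> \<in> carrier G"
    and comm: "\<forall>x\<in>K. \<forall>z\<in>K. conj_elt G \<phi> x \<otimes> z = z \<otimes> conj_elt G \<phi> x"
    unfolding K_def by (rule FM_pair_conj_commuting[OF FM_H c])
  have "K \<subseteq> carrier G"
    unfolding K_def using c \<open>H \<subseteq> carrier G\<close> by auto
  moreover have xK: "x i l \<in> K" if "i < k" "l < m i" for i l
    using dec that unfolding K_def by blast
  ultimately have x: "x i l \<in> carrier G" if "i < k" "l < m i" for i l
    using that by blast
  have "conj_elt G \<phi> (g j) \<otimes> g i = g i \<otimes> conj_elt G \<phi> (g j)" if "i < k" "j < k" for i j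
  proof -
    have "conj_elt G \<phi> (g j) = gprod G (\<lambda>l. conj_elt G \<phi> (x j l)) (m j)"
      using dec x \<phi> \<open>j < k\<close> by (simp add: hom_gprod conj_elt_hom)
    moreover have "gprod G (\<lambda>l. conj_elt G \<phi> (x j l)) (m j) \<otimes> gprod G (x i) (m i)
        = gprod G (x i) (m i) \<otimes> gprod G (\<lambda>l. conj_elt G \<phi> (x j l)) (m j)"
      using comm xK x \<phi> that by (intro gprod_commute_gprod) auto
    ultimately show ?thesis
      using dec that by simp
  qed
  with \<phi> show thesis
    by (intro that) auto
qed

end

section \<open>Fekete's lemma\<close>

lemma subadditive_le_mult_add:
  fixes B :: "nat \<Rightarrow> real"
  assumes sub: "\<And>m n. B (m + n) \<le> B m + B n"
  shows "B (q * N + r) \<le> real q * B N + B r"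
proof (induction q)
  case (Suc q)
  have "B (Suc q * N + r) = B (N + (q * N + r))" by (simp add: algebra_simps)
  also have "\<dots> \<le> B N + B (q * N + r)" by (rule sub)
  finally show ?case using Suc by (simp add: algebra_simps)
qed simp

lemma subadditive_div_le:
  fixes B :: "nat \<Rightarrow> real"
  assumes sub: "\<And>m n. B (m + n) \<le> B m + B n" and nonneg: "\<And>n. B n \<ge> 0"
    and "N > 0" "n > 0"
  shows "B n / n \<le> B N / N + (\<Sum>i<N. B i) / n"
proof -
  have "B n \<le> real (n div N) * B N + B (n mod N)"
    using subadditive_le_mult_add[where B = B, OF sub, of "n div N" N "n mod N"] by simp
  also have "real (n div N) * B N = real (n div N) * real N * (B N / N)"
    using \<open>N > 0\<close> by simp
  also have "\<dots> \<le> real n * (B N / N)"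
  proof (rule mult_right_mono)
    have "n div N * N \<le> n" by simp
    then show "real (n div N) * real N \<le> real n" by (metis of_nat_le_iff of_nat_mult)
  qed (use nonneg in simp)
  also have "B (n mod N) \<le> (\<Sum>i<N. B i)"
    using \<open>N > 0\<close> nonneg by (intro member_le_sum) auto
  finally show ?thesis using \<open>n > 0\<close> by (simp add: field_simps)
qed

lemma subadditive_convergent_div:
  fixes B :: "nat \<Rightarrow> real"
  assumes sub: "\<And>m n. B (m + n) \<le> B m + B n" and nonneg: "\<And>n. B n \<ge> 0"
  shows "convergent (\<lambda>n. B n / n)"
proof -
  \<comment> \<open>\<open>n = 0\<close> is excluded because \<open>B 0 / 0 = 0\<close> is a junk value.\<close>
  define L where "L = (INF n. B (Suc n) / Suc n)"
  have bdd: "bdd_below (range (\<lambda>n. B (Suc n) / Suc n))"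
    using nonneg by (intro bdd_belowI2[of _ 0]) simp
  have lower: "L \<le> B n / n" if "n > 0" for n
  proof -
    have "L \<le> B (Suc (n - 1)) / Suc (n - 1)"
      unfolding L_def by (rule cINF_lower[OF bdd]) simp
    with that show ?thesis by simp
  qed
  have "(\<lambda>n. B n / n) \<longlonglongrightarrow> L"
  proof (rule order_tendstoI)
    fix y assume "y < L"
    with lower show "\<forall>\<^sub>F n in sequentially. y < B n / n"
      by (intro eventually_sequentiallyI[of 1]) (auto intro: less_le_trans)
  next
    fix y assume "L < y"
    then obtain N where "B (Suc N) / Suc N < y"
      unfolding L_def using cINF_less_iff[OF UNIV_not_empty bdd] by blast
    then have "\<forall>\<^sub>F n in sequentially. (\<Sum>i<Suc N. B i) / n < y - B (Suc N) / Suc N"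
      by (intro order_tendstoD(2)[OF lim_const_over_n]) simp
    moreover have "\<forall>\<^sub>F n in sequentially. n > 0"
      by (rule eventually_gt_at_top)
    ultimately show "\<forall>\<^sub>F n in sequentially. B n / n < y"
    proof eventually_elim
      case (elim n)
      with subadditive_div_le[where B = B, OF sub nonneg, of "Suc N" n] show ?case by linarith
    qed
  qed
  then show ?thesis by (auto simp: convergent_def)
qed

lemma quasi_subadditive_convergent_div:
  fixes a :: "nat \<Rightarrow> real"
  assumes "\<And>m n. a (m + n) \<le> a m + a n + C" and "\<And>n. a n \<ge> 0" and "C \<ge> 0"
  shows "convergent (\<lambda>n. a n / n)"
proof -
  have "convergent (\<lambda>n. (a n + C) / n)"
  proof (rule subadditive_convergent_div)
    show "a (m + n) + C \<le> (a m + C) + (a n + C)" for m n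
      using assms(1)[of m n] by simp
    show "a n + C \<ge> 0" for n
      using assms(2,3) by simp
  qed
  moreover have "convergent (\<lambda>n. C / real n)"
    using lim_const_over_n by (auto simp: convergent_def)
  ultimately have "convergent (\<lambda>n. (a n + C) / n - C / n)"
    by (rule convergent_diff)
  then show ?thesis by (simp add: add_divide_distrib)
qed

section \<open>Conjugation-invariant pseudo-norms\<close>

locale cinv_normed_group = group G for G :: "('a, 'b) monoid_scheme" (structure) +
  fixes \<nu> :: "'a \<Rightarrow> real"
  assumes pseudo_norm: "cinv_pseudo_norm G \<nu>"
begin

lemma norm_nonneg: "f \<in> carrier G \<Longrightarrow> \<nu> f \<ge> 0"
  and norm_one [simp]: "\<nu> \<one> = 0"
  and norm_inv [simp]: "f \<in> carrier G \<Longrightarrow> \<nu> (inv f) = \<nu> f"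
  and norm_mult_le: "f \<in> carrier G \<Longrightarrow> g \<in> carrier G \<Longrightarrow> \<nu> (f \<otimes> g) \<le> \<nu> f + \<nu> g"
  and norm_conj [simp]: "f \<in> carrier G \<Longrightarrow> g \<in> carrier G \<Longrightarrow> \<nu> (conj_elt G g f) = \<nu> f"
  using pseudo_norm unfolding cinv_pseudo_norm_def by auto

lemma norm_commutator_le:
  assumes "p \<in> carrier G" "w \<in> carrier G"
  shows "\<nu> (inv (conj_elt G p w) \<otimes> w) \<le> 2 * \<nu> p"
proof -
  have "inv (conj_elt G p w) \<otimes> w = p \<otimes> conj_elt G (inv w) (inv p)"
    unfolding conj_elt_def using assms by (simp add: m_assoc inv_mult_group)
  also have "\<nu> \<dots> \<le> \<nu> p + \<nu> (conj_elt G (inv w) (inv p))"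
    using assms by (intro norm_mult_le) auto
  finally show ?thesis using assms by simp
qed

text \<open>Conjugation invariance lets each error term be pushed to the right end of the product.\<close>
lemma norm_inv_gprod_mult_le:
  assumes "\<forall>i<k. y i \<in> carrier G \<and> e i \<in> carrier G"
  shows "\<nu> (inv (gprod G y k) \<otimes> gprod G (\<lambda>i. y i \<otimes> e i) k) \<le> (\<Sum>i<k. \<nu> (e i))"
  using assms
proof (induction k)
  case (Suc k)
  define E where "E = inv (gprod G y k) \<otimes> gprod G (\<lambda>i. y i \<otimes> e i) k"
  have c: "gprod G y k \<in> carrier G" "gprod G (\<lambda>i. y i \<otimes> e i) k \<in> carrier G" "y k \<in> carrier G" "e k \<in> carrier G"
    using Suc.prems by auto
  then have Ec: "E \<in> carrier G" unfolding E_def by simp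
  have "inv (gprod G y (Suc k)) \<otimes> gprod G (\<lambda>i. y i \<otimes> e i) (Suc k) = conj_elt G (inv (y k)) E \<otimes> e k"
    using Suc.prems c unfolding E_def conj_elt_def by (simp add: gprod_Suc m_assoc inv_mult_group)
  also have "\<nu> \<dots> \<le> \<nu> E + \<nu> (e k)"
    using norm_mult_le[of "conj_elt G (inv (y k)) E" "e k"] Ec c by simp
  finally show ?case using Suc unfolding E_def by simp
qed simp

lemma norm_gprod_mult_le:
  assumes "\<forall>i<k. y i \<in> carrier G \<and> e i \<in> carrier G"
  shows "\<nu> (gprod G (\<lambda>i. y i \<otimes> e i) k) \<le> \<nu> (gprod G y k) + (\<Sum>i<k. \<nu> (e i))"
proof -
  have c: "gprod G y k \<in> carrier G" "gprod G (\<lambda>i. y i \<otimes> e i) k \<in> carrier G"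
    using assms by auto
  then have "gprod G (\<lambda>i. y i \<otimes> e i) k = gprod G y k \<otimes> (inv (gprod G y k) \<otimes> gprod G (\<lambda>i. y i \<otimes> e i) k)"
    by simp
  also have "\<nu> \<dots> \<le> \<nu> (gprod G y k) + \<nu> (inv (gprod G y k) \<otimes> gprod G (\<lambda>i. y i \<otimes> e i) k)"
    using c by (intro norm_mult_le) auto
  finally show ?thesis using norm_inv_gprod_mult_le[OF assms] by simp
qed

lemma norm_gprod_int_pow_add_le:
  fixes a b d :: "nat \<Rightarrow> int"
  assumes p: "p \<in> carrier G" and g: "\<forall>i<k. g i \<in> carrier G"
    and comm: "\<forall>i<k. \<forall>j<k. conj_elt G p (g j) \<otimes> g i = g i \<otimes> conj_elt G p (g j)"
    and d: "\<forall>i<k. d i = 0 \<or> d i = 1"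
  shows "\<nu> (gprod G (\<lambda>i. g i [^] (a i + b i + d i)) k)
    \<le> \<nu> (gprod G (\<lambda>i. g i [^] a i) k) + \<nu> (gprod G (\<lambda>i. g i [^] b i) k) + (\<Sum>i<k. 2 * \<nu> p + \<nu> (g i))"
proof -
  define x where "x i = g i [^] a i" for i
  define w where "w i = g i [^] b i" for i
  define e where "e i = inv (conj_elt G p (w i)) \<otimes> w i \<otimes> g i [^] d i" for i
  have c: "x i \<in> carrier G" "w i \<in> carrier G" "e i \<in> carrier G" if "i < k" for i
    using that g p unfolding x_def w_def e_def by auto
  have "g i [^] (a i + b i + d i) = x i \<otimes> conj_elt G p (w i) \<otimes> e i" if "i < k" for i
    using that g c p unfolding x_def w_def e_def by (simp add: int_pow_mult m_assoc)
  then have "gprod G (\<lambda>i. g i [^] (a i + b i + d i)) k = gprod G (\<lambda>i. x i \<otimes> conj_elt G p (w i) \<otimes> e i) k"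
    by (intro gprod_cong) auto
  also have "\<nu> \<dots> \<le> \<nu> (gprod G (\<lambda>i. x i \<otimes> conj_elt G p (w i)) k) + (\<Sum>i<k. \<nu> (e i))"
    using c p by (intro norm_gprod_mult_le) auto
  also have "gprod G (\<lambda>i. x i \<otimes> conj_elt G p (w i)) k = gprod G x k \<otimes> conj_elt G p (gprod G w k)"
  proof (rule gprod_mult_conj_elt_gprod)
    show "\<forall>i<k. \<forall>j<k. conj_elt G p (w j) \<otimes> x i = x i \<otimes> conj_elt G p (w j)"
      unfolding x_def w_def using p g comm by (auto intro: conj_elt_int_pow_commute)
  qed (use p c in auto)
  also have "\<nu> (gprod G x k \<otimes> conj_elt G p (gprod G w k)) \<le> \<nu> (gprod G x k) + \<nu> (gprod G w k)"
  proof -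
    have "gprod G x k \<in> carrier G" "gprod G w k \<in> carrier G"
      using c by auto
    then show ?thesis using norm_mult_le[of "gprod G x k" "conj_elt G p (gprod G w k)"] p by simp
  qed
  also have "(\<Sum>i<k. \<nu> (e i)) \<le> (\<Sum>i<k. 2 * \<nu> p + \<nu> (g i))"
  proof (rule sum_mono)
    fix i assume "i \<in> {..<k}"
    then have i: "i < k" by simp
    have "\<nu> (e i) \<le> \<nu> (inv (conj_elt G p (w i)) \<otimes> w i) + \<nu> (g i [^] d i)"
      unfolding e_def using c[OF i] g i p by (intro norm_mult_le) auto
    moreover have "\<nu> (inv (conj_elt G p (w i)) \<otimes> w i) \<le> 2 * \<nu> p"
      using c[OF i] p by (intro norm_commutator_le)
    moreover have "\<nu> (g i [^] d i) \<le> \<nu> (g i)"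
      using d g i norm_nonneg by fastforce
    ultimately show "\<nu> (e i) \<le> 2 * \<nu> p + \<nu> (g i)" by simp
  qed
  finally show ?thesis unfolding x_def w_def by simp
qed

lemma norm_gprod_pow_floor_add_le:
  assumes "p \<in> carrier G" "\<forall>i<k. g i \<in> carrier G"
    and "\<forall>i<k. \<forall>j<k. conj_elt G p (g j) \<otimes> g i = g i \<otimes> conj_elt G p (g j)"
  shows "\<nu> (gprod G (\<lambda>i. g i [^] \<lfloor>s i * real (m + n)\<rfloor>) k)
    \<le> \<nu> (gprod G (\<lambda>i. g i [^] \<lfloor>s i * real m\<rfloor>) k) + \<nu> (gprod G (\<lambda>i. g i [^] \<lfloor>s i * real n\<rfloor>) k)
       + (\<Sum>i<k. 2 * \<nu> p + \<nu> (g i))"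
proof -
  define d where "d i = \<lfloor>s i * real (m + n)\<rfloor> - \<lfloor>s i * real m\<rfloor> - \<lfloor>s i * real n\<rfloor>" for i
  have "d i = 0 \<or> d i = 1" for i
    unfolding d_def by (simp add: distrib_left floor_add)
  then show ?thesis
    using norm_gprod_int_pow_add_le[OF assms, of d "\<lambda>i. \<lfloor>s i * real m\<rfloor>" "\<lambda>i. \<lfloor>s i * real n\<rfloor>"]
    by (simp add: d_def)
qed

end

theorem proposition2p1:
  fixes G :: "('a, 'b) monoid_scheme" and \<nu> :: "'a \<Rightarrow> real"
    and k :: nat and g :: "nat \<Rightarrow> 'a" and s :: "nat \<Rightarrow> real"
  assumes "group G" and "FM G" and "cinv_pseudo_norm G \<nu>"
    and "\<forall>i<k. g i \<in> carrier G"
  shows "convergent (\<lambda>n::nat. \<nu> (gprod G (\<lambda>i. g i [^]\<^bsub>G\<^esub> \<lfloor>s i * real n\<rfloor>) k) / real n)"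
proof -
  interpret cinv_normed_group G \<nu>
    using assms by (simp add: cinv_normed_group_def cinv_normed_group_axioms_def)
  obtain p where p: "p \<in> carrier G"
    and comm: "\<forall>i<k. \<forall>j<k. conj_elt G p (g j) \<otimes>\<^bsub>G\<^esub> g i = g i \<otimes>\<^bsub>G\<^esub> conj_elt G p (g j)"
    using FM_conj_commuting[OF assms(2,4)] by blast
  show ?thesis
  proof (rule quasi_subadditive_convergent_div)
    show "\<nu> (gprod G (\<lambda>i. g i [^]\<^bsub>G\<^esub> \<lfloor>s i * real (m + n)\<rfloor>) k)
      \<le> \<nu> (gprod G (\<lambda>i. g i [^]\<^bsub>G\<^esub> \<lfloor>s i * real m\<rfloor>) k) + \<nu> (gprod G (\<lambda>i. g i [^]\<^bsub>G\<^esub> \<lfloor>s i * real n\<rfloor>) k)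
         + (\<Sum>i<k. 2 * \<nu> p + \<nu> (g i))" for m n
      using p assms(4) comm by (rule norm_gprod_pow_floor_add_le)
    show "\<nu> (gprod G (\<lambda>i. g i [^]\<^bsub>G\<^esub> \<lfloor>s i * real n\<rfloor>) k) \<ge> 0" for n
      using assms(4) by (intro norm_nonneg gprod_closed) auto
    show "(\<Sum>i<k. 2 * \<nu> p + \<nu> (g i)) \<ge> 0"
      using p assms(4) norm_nonneg by (intro sum_nonneg) auto
  qed
qed

end
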